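(* There exists a CF program $\mathtt{p}$ that terminates on every input $x\in\{0,1\}^*$ and whose native running time $\mathit{time}_{\mathtt{p}}(x)$ is exponential in $|x|$ (in particular, not bounded by any polynomial in $|x|$).
   Context: CF ("cons-free") is a first-order, call-by-value functional language over booleans and bit lists $\{0,1\}^*$. A program is a finite sequence of mutually recursive function definitions $\mathtt{f\ x1 \dots xm = e}$ ($m\ge0$), the first being a one-argument entry function. Expressions are $\mathtt{True}$, $\mathtt{False}$, $\mathtt{[]}$, variables, base calls $\mathtt{not\ e}$, $\mathtt{null\ e}$, $\mathtt{head\ e}$, $\mathtt{tail\ e}$, conditionals $\mathtt{if\ e_0\ then\ e_1\ else\ e_2}$, and calls $\mathtt{f\ e_1\dots e_m}$ of defined functions; there are no list constructors. Semantics is standard big-step call-by-value evaluation given by inference rules deriving $\mathtt{p},\rho\vdash\mathtt{e}\to v$ (a call evaluates all arguments, then the body in the new environment; a conditional evaluates its test, then only the selected branch). The derivation tree for the run on input $x$ is the computation tree $\mathcal{T}^{\mathtt{p},x}$, and the native running time $\mathit{time}_{\mathtt{p}}(x)$ is the number of nodes of $\mathcal{T}^{\mathtt{p},x}$. *)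

theory Defs
  imports Complex_Main
begin

(* Values of CF: booleans and bit lists (bits represented as booleans). *)
datatype val = VB bool | VL "bool list"

(* Expressions. Variables are de Bruijn-style indices into the argument list
   of the enclosing function; defined functions are indices into the program. *)
datatype expr =
    ETrue | EFalse | ENil
  | Var nat
  | ENot expr | ENull expr | EHead expr | ETail expr
  | EIf expr expr expr
  | ECall nat "expr list"

(* A program: list of definitions (arity m, body); entry function is index 0. *)
type_synonym prog = "(nat \<times> expr) list"

fun wf_expr :: "prog \<Rightarrow> nat \<Rightarrow> expr \<Rightarrow> bool" where
  "wf_expr p m ETrue = True"
| "wf_expr p m EFalse = True"
| "wf_expr p m ENil = True"
| "wf_expr p m (Var i) = (i < m)"
| "wf_expr p m (ENot e) = wf_expr p m e"
| "wf_expr p m (ENull e) = wf_expr p m e"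
| "wf_expr p m (EHead e) = wf_expr p m e"
| "wf_expr p m (ETail e) = wf_expr p m e"
| "wf_expr p m (EIf e0 e1 e2) = (wf_expr p m e0 \<and> wf_expr p m e1 \<and> wf_expr p m e2)"
| "wf_expr p m (ECall f es) =
     (f < length p \<and> fst (p ! f) = length es \<and> (\<forall>e\<in>set es. wf_expr p m e))"

definition wf_prog :: "prog \<Rightarrow> bool" where
  "wf_prog p \<longleftrightarrow> p \<noteq> [] \<and> fst (p ! 0) = 1 \<and>
     (\<forall>d\<in>set p. wf_expr p (fst d) (snd d))"

(* Big-step call-by-value semantics; the last argument counts the number of
   nodes of the derivation (computation) tree. evals handles argument lists
   (its count is the total number of nodes of the argument subderivations). *)
inductive eval :: "prog \<Rightarrow> val list \<Rightarrow> expr \<Rightarrow> val \<Rightarrow> nat \<Rightarrow> bool"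
  and evals :: "prog \<Rightarrow> val list \<Rightarrow> expr list \<Rightarrow> val list \<Rightarrow> nat \<Rightarrow> bool"
  for p :: prog where
  ev_true: "eval p \<rho> ETrue (VB True) 1"
| ev_false: "eval p \<rho> EFalse (VB False) 1"
| ev_nil: "eval p \<rho> ENil (VL []) 1"
| ev_var: "i < length \<rho> \<Longrightarrow> eval p \<rho> (Var i) (\<rho> ! i) 1"
| ev_not: "eval p \<rho> e (VB b) n \<Longrightarrow> eval p \<rho> (ENot e) (VB (\<not> b)) (Suc n)"
| ev_null: "eval p \<rho> e (VL xs) n \<Longrightarrow> eval p \<rho> (ENull e) (VB (xs = [])) (Suc n)"
| ev_head: "eval p \<rho> e (VL (a # xs)) n \<Longrightarrow> eval p \<rho> (EHead e) (VB a) (Suc n)"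
| ev_tail: "eval p \<rho> e (VL (a # xs)) n \<Longrightarrow> eval p \<rho> (ETail e) (VL xs) (Suc n)"
| ev_if_true: "eval p \<rho> e0 (VB True) n0 \<Longrightarrow> eval p \<rho> e1 v n1 \<Longrightarrow>
     eval p \<rho> (EIf e0 e1 e2) v (Suc (n0 + n1))"
| ev_if_false: "eval p \<rho> e0 (VB False) n0 \<Longrightarrow> eval p \<rho> e2 v n2 \<Longrightarrow>
     eval p \<rho> (EIf e0 e1 e2) v (Suc (n0 + n2))"
| ev_call: "f < length p \<Longrightarrow> fst (p ! f) = length es \<Longrightarrow>
     evals p \<rho> es vs n \<Longrightarrow> eval p vs (snd (p ! f)) v m \<Longrightarrow>
     eval p \<rho> (ECall f es) v (Suc (n + m))"
| evs_nil: "evals p \<rho> [] [] 0"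
| evs_cons: "eval p \<rho> e v n \<Longrightarrow> evals p \<rho> es vs m \<Longrightarrow>
     evals p \<rho> (e # es) (v # vs) (n + m)"

definition terminates :: "prog \<Rightarrow> bool list \<Rightarrow> bool" where
  "terminates p x \<longleftrightarrow> (\<exists>v n. eval p [VL x] (snd (p ! 0)) v n)"

definition time :: "prog \<Rightarrow> bool list \<Rightarrow> nat" where
  "time p x = (THE n. \<exists>v. eval p [VL x] (snd (p ! 0)) v n)"

end

theory Submission
  imports Defs "HOL-Real_Asymp.Real_Asymp"
begin

text \<open>The entry function of the witness program calls itself twice on the tail of its
  argument, so each input bit doubles the computation tree: its size \<open>t\<close> satisfies
  \<open>t (n + 1) = 2 t n + 10\<close>. Since evaluation is deterministic, this size is the
  running time, which therefore grows like \<open>2\<^sup>n\<close> and beats every polynomial.\<close>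

inductive_cases eval_ETrueE: "eval p \<rho> ETrue v n"
inductive_cases eval_EFalseE: "eval p \<rho> EFalse v n"
inductive_cases eval_ENilE: "eval p \<rho> ENil v n"
inductive_cases eval_VarE: "eval p \<rho> (Var i) v n"
inductive_cases eval_ENotE: "eval p \<rho> (ENot e) v n"
inductive_cases eval_ENullE: "eval p \<rho> (ENull e) v n"
inductive_cases eval_EHeadE: "eval p \<rho> (EHead e) v n"
inductive_cases eval_ETailE: "eval p \<rho> (ETail e) v n"
inductive_cases eval_EIfE: "eval p \<rho> (EIf e0 e1 e2) v n"
inductive_cases eval_ECallE: "eval p \<rho> (ECall f es) v n"
inductive_cases evals_NilE: "evals p \<rho> [] vs n"
inductive_cases evals_ConsE: "evals p \<rho> (e # es) vs n"

lemma eval_evals_deterministic: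
  "eval p \<rho> e v n \<Longrightarrow> eval p \<rho> e v' n' \<Longrightarrow> v' = v \<and> n' = n"
  "evals p \<rho> es vs n \<Longrightarrow> evals p \<rho> es vs' n' \<Longrightarrow> vs' = vs \<and> n' = n"
proof (induction arbitrary: v' n' and vs' n' rule: eval_evals.inducts)
  \<comment> \<open>Each \<open>IH\<close> list interleaves the rule's premises with their induction hypotheses.\<close>
  case ev_not
  from ev_not.prems show ?case
    by (rule eval_ENotE) (auto dest: ev_not.IH(2))
next
  case ev_null
  from ev_null.prems show ?case
    by (rule eval_ENullE) (auto dest: ev_null.IH(2))
next
  case ev_head
  from ev_head.prems show ?case
    by (rule eval_EHeadE) (auto dest: ev_head.IH(2))
next
  case ev_tail
  from ev_tail.prems show ?case
    by (rule eval_ETailE) (auto dest: ev_tail.IH(2))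
next
  case ev_if_true
  from ev_if_true.prems show ?case
    by (rule eval_EIfE) (auto dest: ev_if_true.IH(2,4))
next
  case ev_if_false
  from ev_if_false.prems show ?case
    by (rule eval_EIfE) (auto dest: ev_if_false.IH(2,4))
next
  case ev_call
  from ev_call.prems show ?case
    by (rule eval_ECallE) (auto dest: ev_call.IH(4,6))
next
  case evs_cons
  from evs_cons.prems show ?case
    by (rule evals_ConsE) (auto dest: evs_cons.IH(2,4))
qed (auto elim: eval_ETrueE eval_EFalseE eval_ENilE eval_VarE evals_NilE)

lemma time_eqI:
  assumes "eval p [VL x] (snd (p ! 0)) v n"
  shows "time p x = n"
  unfolding time_def
  by (rule the_equality) (use assms eval_evals_deterministic(1) in blast)+

lemma eval_Var_singleton: "eval p [v] (Var 0) v 1"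
  using eval_evals.ev_var[of 0 "[v]" p] by simp

lemma eval_ENull_Var_singleton: "eval p [VL x] (ENull (Var 0)) (VB (x = [])) 2"
  using eval_evals.ev_null[OF eval_Var_singleton] by (simp add: numeral_2_eq_2)

definition tail_call :: expr where
  "tail_call = ECall 0 [ETail (Var 0)]"

text \<open>In CF syntax: \<open>f x = if null x then True else if f (tail x) then f (tail x) else False\<close>.\<close>

definition doubling_body :: expr where
  "doubling_body = EIf (ENull (Var 0)) ETrue (EIf tail_call tail_call EFalse)"

definition doubling_prog :: prog where
  "doubling_prog = [(1, doubling_body)]"

fun doubling_time :: "nat \<Rightarrow> nat" where
  "doubling_time 0 = 4"
| "doubling_time (Suc n) = 2 * doubling_time n + 10"

lemma wf_doubling_prog: "wf_prog doubling_prog"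
  by (simp add: wf_prog_def doubling_prog_def doubling_body_def tail_call_def)

lemma eval_tail_call:
  assumes "eval doubling_prog [VL xs] doubling_body v n"
  shows "eval doubling_prog [VL (a # xs)] tail_call v (n + 3)"
proof -
  have "eval doubling_prog [VL (a # xs)] (ETail (Var 0)) (VL xs) 2"
    using eval_evals.ev_tail[OF eval_Var_singleton] by (simp add: numeral_2_eq_2)
  then have args: "evals doubling_prog [VL (a # xs)] [ETail (Var 0)] [VL xs] 2"
    using eval_evals.evs_cons[OF _ eval_evals.evs_nil] by fastforce
  have "eval doubling_prog [VL (a # xs)] tail_call v (Suc (2 + n))"
    unfolding tail_call_def
    by (rule eval_evals.ev_call[OF _ _ args]) (use assms in \<open>simp_all add: doubling_prog_def\<close>)
  then show ?thesis
    by (simp add: numeral_3_eq_3)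
qed

lemma eval_doubling_body:
  "eval doubling_prog [VL x] doubling_body (VB True) (doubling_time (length x))"
proof (induction x)
  case Nil
  from eval_evals.ev_if_true[OF eval_ENull_Var_singleton[of _ "[]", simplified]
      eval_evals.ev_true]
  show ?case
    by (simp add: doubling_body_def)
next
  case (Cons a xs)
  let ?t = "doubling_time (length xs)"
  have "eval doubling_prog [VL (a # xs)] (EIf tail_call tail_call EFalse) (VB True)
      (Suc ((?t + 3) + (?t + 3)))"
    using Cons by (intro eval_evals.ev_if_true eval_tail_call)
  then have "eval doubling_prog [VL (a # xs)] doubling_body (VB True)
      (Suc (2 + Suc ((?t + 3) + (?t + 3))))"
    unfolding doubling_body_def
    by (rule eval_evals.ev_if_false[OF eval_ENull_Var_singleton[of _ "a # xs", simplified]])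
  then show ?case
    by (simp add: add.commute)
qed

lemma time_doubling_prog: "time doubling_prog x = doubling_time (length x)"
  by (rule time_eqI) (use eval_doubling_body in \<open>simp add: doubling_prog_def\<close>)

lemma terminates_doubling_prog: "terminates doubling_prog x"
  using eval_doubling_body by (auto simp: terminates_def doubling_prog_def)

lemma two_power_le_doubling_time: "2 ^ n \<le> doubling_time n"
  by (induction n) simp_all

lemma two_power_le_time_doubling_prog: "2 ^ length x \<le> real (time doubling_prog x)"
  by (simp add: time_doubling_prog two_power_le_doubling_time)

lemma ex_polynomial_less_two_power: "\<exists>n. d * (real n + 1) ^ k < 2 ^ n"
proof -
  have "\<forall>\<^sub>F n in sequentially. d * (real n + 1) ^ k < 2 ^ n"
    by real_asymp
  then show ?thesis
    by (auto simp: eventually_sequentially)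
qed

theorem theorem4:
  shows "\<exists>p. wf_prog p \<and> (\<forall>x. terminates p x) \<and>
           (\<exists>c::real. c > 1 \<and> (\<forall>x. c ^ length x \<le> real (time p x))) \<and>
           (\<forall>k::nat. \<forall>d::real. \<exists>x. real (time p x) > d * (real (length x) + 1) ^ k)"
proof (intro exI[of _ doubling_prog] conjI allI)
  show "\<exists>c::real. c > 1 \<and> (\<forall>x. c ^ length x \<le> real (time doubling_prog x))"
    by (intro exI[of _ 2] conjI allI two_power_le_time_doubling_prog) simp
  fix k :: nat and d :: real
  obtain n where "d * (real n + 1) ^ k < 2 ^ n"
    using ex_polynomial_less_two_power by blast
  also have "\<dots> \<le> real (time doubling_prog (replicate n True))"
    using two_power_le_time_doubling_prog[of "replicate n True"] by simp
  finally show "\<exists>x. real (time doubling_prog x) > d * (real (length x) + 1) ^ k"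
    by (metis length_replicate)
qed (simp_all add: wf_doubling_prog terminates_doubling_prog)

end
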